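(* Let $F\colon\mathbb{A}\to\mathbb{B}$ be a double functor between double categories. Then $F$ is a double fibration if and only if both 2-functors $\mathbf{H}F\colon\mathbf{H}\mathbb{A}\to\mathbf{H}\mathbb{B}$ and $\mathcal{V}F\colon\mathcal{V}\mathbb{A}\to\mathcal{V}\mathbb{B}$ are Lack fibrations.
   Context: A double category has objects, horizontal morphisms, vertical morphisms and squares; a square $\alpha\colon(u\,{}^{a}_{b}\,v)$ has top horizontal boundary $a\colon A\to B$, bottom horizontal boundary $b\colon A'\to B'$, left vertical boundary $u\colon A\to A'$ and right vertical boundary $v\colon B\to B'$; compositions are strictly associative and unital and satisfy interchange; $e_A$ is the vertical identity on $A$; a square is vertically invertible if it is invertible for vertical composition. $\mathbf{H}\mathbb{A}$ is the underlying horizontal 2-category of $\mathbb{A}$: objects and horizontal morphisms of $\mathbb{A}$, and as 2-cells $a\Rightarrow b$ the squares $(e_A\,{}^{a}_{b}\,e_B)$. $\mathcal{V}\mathbb{A}$ is the 2-category whose objects are vertical morphisms $u\colon A\to A'$ of $\mathbb{A}$, whose morphisms $u\to v$ are squares with left boundary $u$ and right boundary $v$ (composed horizontally), and whose 2-cells from $\alpha\colon(u\,{}^{a}_{b}\,v)$ to $\beta\colon(u\,{}^{c}_{d}\,v)$ are pairs of squares $\sigma_0\colon(e_A\,{}^{a}_{c}\,e_B)$, $\sigma_1\colon(e_{A'}\,{}^{b}_{d}\,e_{B'})$ such that $\sigma_0$ vertically composed on top of $\beta$ equals $\alpha$ vertically composed on top of $\sigma_1$. A horizontal morphism is a horizontal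 equivalence if it is an equivalence in $\mathbf{H}\mathbb{A}$; a square is weakly horizontally invertible if it is an equivalence in $\mathcal{V}\mathbb{A}$. A 2-functor $G\colon\mathcal{A}\to\mathcal{B}$ is a Lack fibration if (f1) for every equivalence $b\colon B\to GC$ in $\mathcal{B}$ there is an equivalence $a\colon A\to C$ in $\mathcal{A}$ with $Ga=b$; (f2) for every morphism $c\colon A\to C$ in $\mathcal{A}$ and invertible 2-cell $\beta\colon b\cong Gc$ in $\mathcal{B}$ there is an invertible 2-cell $\alpha\colon a\cong c$ in $\mathcal{A}$ with $G\alpha=\beta$. A double functor $F\colon\mathbb{A}\to\mathbb{B}$ is a double fibration if (df1) for every horizontal equivalence $b\colon B\to FC$ in $\mathbb{B}$ there is a horizontal equivalence $a\colon A\to C$ in $\mathbb{A}$ with $Fa=b$; (df2) for every horizontal morphism $c\colon A\to C$ in $\mathbb{A}$ and every vertically invertible square $\beta\colon(e_{FA}\,{}^{b}_{Fc}\,e_{FC})$ in $\mathbb{B}$ there is a vertically invertible square $\alpha\colon(e_A\,{}^{a}_{c}\,e_C)$ in $\mathbb{A}$ with $F\alpha=\beta$; (df3) for every vertical morphism $u'\colon C\to C'$ in $\mathbb{A}$ and every weakly horizontally invertible square $\beta$ in $\mathbb{B}$ with right boundary $Fu'$ (and some left boundary $v\colon B\to B'$), there is a weakly horizontally invertible square $\alpha$ in $\mathbb{A}$ with right boundary $u'$ and $F\alpha=\beta$. *)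

theory Defs
  imports Main
begin

text \<open>Conventions: all compositions are written in diagrammatic order.
  hcomp a b is a followed by b (requires hcod a = hdom b);
  vcomp u v is u followed by v (requires vcod u = vdom v);
  sq_hcomp al be places al to the left of be (requires right al = left be);
  sq_vcomp al be places al on top of be (requires bot al = top be).
  sq_hid u is the horizontal identity square on the vertical morphism u,
  sq_vid a is the vertical identity square on the horizontal morphism a.\<close>

record ('o, 'h, 'v, 's) dblcat =
  Ob :: "'o set"
  HMor :: "'h set"
  VMor :: "'v set"
  Sq :: "'s set"
  hdom :: "'h \<Rightarrow> 'o"
  hcod :: "'h \<Rightarrow> 'o"
  vdom :: "'v \<Rightarrow> 'o"
  vcod :: "'v \<Rightarrow> 'o"
  sq_top :: "'s \<Rightarrow> 'h"
  sq_bot :: "'s \<Rightarrow> 'h"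
  sq_left :: "'s \<Rightarrow> 'v"
  sq_right :: "'s \<Rightarrow> 'v"
  hcomp :: "'h \<Rightarrow> 'h \<Rightarrow> 'h"
  hid :: "'o \<Rightarrow> 'h"
  vcomp :: "'v \<Rightarrow> 'v \<Rightarrow> 'v"
  vid :: "'o \<Rightarrow> 'v"
  sq_hcomp :: "'s \<Rightarrow> 's \<Rightarrow> 's"
  sq_hid :: "'v \<Rightarrow> 's"
  sq_vcomp :: "'s \<Rightarrow> 's \<Rightarrow> 's"
  sq_vid :: "'h \<Rightarrow> 's"

definition double_category :: "('o, 'h, 'v, 's, 'x) dblcat_scheme \<Rightarrow> bool" where
  "double_category D \<longleftrightarrow>
    \<comment> \<open>boundaries of horizontal and vertical morphisms\<close>
    (\<forall>a\<in>HMor D. hdom D a \<in> Ob D \<and> hcod D a \<in> Ob D) \<and>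
    (\<forall>u\<in>VMor D. vdom D u \<in> Ob D \<and> vcod D u \<in> Ob D) \<and>
    \<comment> \<open>horizontal category\<close>
    (\<forall>X\<in>Ob D. hid D X \<in> HMor D \<and> hdom D (hid D X) = X \<and> hcod D (hid D X) = X) \<and>
    (\<forall>a\<in>HMor D. \<forall>b\<in>HMor D. hcod D a = hdom D b \<longrightarrow>
        hcomp D a b \<in> HMor D \<and> hdom D (hcomp D a b) = hdom D a \<and> hcod D (hcomp D a b) = hcod D b) \<and>
    (\<forall>a\<in>HMor D. hcomp D (hid D (hdom D a)) a = a \<and> hcomp D a (hid D (hcod D a)) = a) \<and>
    (\<forall>a\<in>HMor D. \<forall>b\<in>HMor D. \<forall>c\<in>HMor D. hcod D a = hdom D b \<longrightarrow> hcod D b = hdom D c \<longrightarrow>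
        hcomp D (hcomp D a b) c = hcomp D a (hcomp D b c)) \<and>
    \<comment> \<open>vertical category\<close>
    (\<forall>X\<in>Ob D. vid D X \<in> VMor D \<and> vdom D (vid D X) = X \<and> vcod D (vid D X) = X) \<and>
    (\<forall>u\<in>VMor D. \<forall>v\<in>VMor D. vcod D u = vdom D v \<longrightarrow>
        vcomp D u v \<in> VMor D \<and> vdom D (vcomp D u v) = vdom D u \<and> vcod D (vcomp D u v) = vcod D v) \<and>
    (\<forall>u\<in>VMor D. vcomp D (vid D (vdom D u)) u = u \<and> vcomp D u (vid D (vcod D u)) = u) \<and>
    (\<forall>u\<in>VMor D. \<forall>v\<in>VMor D. \<forall>w\<in>VMor D. vcod D u = vdom D v \<longrightarrow> vcod D v = vdom D w \<longrightarrow>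
        vcomp D (vcomp D u v) w = vcomp D u (vcomp D v w)) \<and>
    \<comment> \<open>boundaries of squares\<close>
    (\<forall>s\<in>Sq D. sq_top D s \<in> HMor D \<and> sq_bot D s \<in> HMor D \<and>
        sq_left D s \<in> VMor D \<and> sq_right D s \<in> VMor D \<and>
        hdom D (sq_top D s) = vdom D (sq_left D s) \<and> hcod D (sq_top D s) = vdom D (sq_right D s) \<and>
        hdom D (sq_bot D s) = vcod D (sq_left D s) \<and> hcod D (sq_bot D s) = vcod D (sq_right D s)) \<and>
    \<comment> \<open>horizontal composition of squares\<close>
    (\<forall>u\<in>VMor D. sq_hid D u \<in> Sq D \<and> sq_left D (sq_hid D u) = u \<and> sq_right D (sq_hid D u) = u \<and>
        sq_top D (sq_hid D u) = hid D (vdom D u) \<and> sq_bot D (sq_hid D u) = hid D (vcod D u)) \<and>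
    (\<forall>s\<in>Sq D. \<forall>t\<in>Sq D. sq_right D s = sq_left D t \<longrightarrow>
        sq_hcomp D s t \<in> Sq D \<and>
        sq_top D (sq_hcomp D s t) = hcomp D (sq_top D s) (sq_top D t) \<and>
        sq_bot D (sq_hcomp D s t) = hcomp D (sq_bot D s) (sq_bot D t) \<and>
        sq_left D (sq_hcomp D s t) = sq_left D s \<and> sq_right D (sq_hcomp D s t) = sq_right D t) \<and>
    (\<forall>s\<in>Sq D. sq_hcomp D (sq_hid D (sq_left D s)) s = s \<and> sq_hcomp D s (sq_hid D (sq_right D s)) = s) \<and>
    (\<forall>s\<in>Sq D. \<forall>t\<in>Sq D. \<forall>r\<in>Sq D. sq_right D s = sq_left D t \<longrightarrow> sq_right D t = sq_left D r \<longrightarrow>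
        sq_hcomp D (sq_hcomp D s t) r = sq_hcomp D s (sq_hcomp D t r)) \<and>
    \<comment> \<open>vertical composition of squares\<close>
    (\<forall>a\<in>HMor D. sq_vid D a \<in> Sq D \<and> sq_top D (sq_vid D a) = a \<and> sq_bot D (sq_vid D a) = a \<and>
        sq_left D (sq_vid D a) = vid D (hdom D a) \<and> sq_right D (sq_vid D a) = vid D (hcod D a)) \<and>
    (\<forall>s\<in>Sq D. \<forall>t\<in>Sq D. sq_bot D s = sq_top D t \<longrightarrow>
        sq_vcomp D s t \<in> Sq D \<and>
        sq_top D (sq_vcomp D s t) = sq_top D s \<and> sq_bot D (sq_vcomp D s t) = sq_bot D t \<and>
        sq_left D (sq_vcomp D s t) = vcomp D (sq_left D s) (sq_left D t) \<and>
        sq_right D (sq_vcomp D s t) = vcomp D (sq_right D s) (sq_right D t)) \<and>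
    (\<forall>s\<in>Sq D. sq_vcomp D (sq_vid D (sq_top D s)) s = s \<and> sq_vcomp D s (sq_vid D (sq_bot D s)) = s) \<and>
    (\<forall>s\<in>Sq D. \<forall>t\<in>Sq D. \<forall>r\<in>Sq D. sq_bot D s = sq_top D t \<longrightarrow> sq_bot D t = sq_top D r \<longrightarrow>
        sq_vcomp D (sq_vcomp D s t) r = sq_vcomp D s (sq_vcomp D t r)) \<and>
    \<comment> \<open>compatibility of identities and interchange\<close>
    (\<forall>X\<in>Ob D. sq_hid D (vid D X) = sq_vid D (hid D X)) \<and>
    (\<forall>u\<in>VMor D. \<forall>v\<in>VMor D. vcod D u = vdom D v \<longrightarrow>
        sq_hid D (vcomp D u v) = sq_vcomp D (sq_hid D u) (sq_hid D v)) \<and>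
    (\<forall>a\<in>HMor D. \<forall>b\<in>HMor D. hcod D a = hdom D b \<longrightarrow>
        sq_vid D (hcomp D a b) = sq_hcomp D (sq_vid D a) (sq_vid D b)) \<and>
    (\<forall>s\<in>Sq D. \<forall>t\<in>Sq D. \<forall>p\<in>Sq D. \<forall>q\<in>Sq D.
        sq_right D s = sq_left D t \<longrightarrow> sq_right D p = sq_left D q \<longrightarrow>
        sq_bot D s = sq_top D p \<longrightarrow> sq_bot D t = sq_top D q \<longrightarrow>
        sq_vcomp D (sq_hcomp D s t) (sq_hcomp D p q) = sq_hcomp D (sq_vcomp D s p) (sq_vcomp D t q))"

record ('o1, 'h1, 'v1, 's1, 'o2, 'h2, 'v2, 's2) dblfun =
  fob :: "'o1 \<Rightarrow> 'o2"
  fh :: "'h1 \<Rightarrow> 'h2"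
  fv :: "'v1 \<Rightarrow> 'v2"
  fsq :: "'s1 \<Rightarrow> 's2"

definition double_functor ::
  "('o1, 'h1, 'v1, 's1, 'x) dblcat_scheme \<Rightarrow> ('o2, 'h2, 'v2, 's2, 'y) dblcat_scheme \<Rightarrow>
   ('o1, 'h1, 'v1, 's1, 'o2, 'h2, 'v2, 's2) dblfun \<Rightarrow> bool" where
  "double_functor A B F \<longleftrightarrow> double_category A \<and> double_category B \<and>
    (\<forall>X\<in>Ob A. fob F X \<in> Ob B) \<and>
    (\<forall>a\<in>HMor A. fh F a \<in> HMor B \<and> hdom B (fh F a) = fob F (hdom A a) \<and> hcod B (fh F a) = fob F (hcod A a)) \<and>
    (\<forall>u\<in>VMor A. fv F u \<in> VMor B \<and> vdom B (fv F u) = fob F (vdom A u) \<and> vcod B (fv F u) = fob F (vcod A u)) \<and>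
    (\<forall>s\<in>Sq A. fsq F s \<in> Sq B \<and>
        sq_top B (fsq F s) = fh F (sq_top A s) \<and> sq_bot B (fsq F s) = fh F (sq_bot A s) \<and>
        sq_left B (fsq F s) = fv F (sq_left A s) \<and> sq_right B (fsq F s) = fv F (sq_right A s)) \<and>
    (\<forall>X\<in>Ob A. fh F (hid A X) = hid B (fob F X) \<and> fv F (vid A X) = vid B (fob F X)) \<and>
    (\<forall>a\<in>HMor A. \<forall>b\<in>HMor A. hcod A a = hdom A b \<longrightarrow> fh F (hcomp A a b) = hcomp B (fh F a) (fh F b)) \<and>
    (\<forall>u\<in>VMor A. \<forall>v\<in>VMor A. vcod A u = vdom A v \<longrightarrow> fv F (vcomp A u v) = vcomp B (fv F u) (fv F v)) \<and>
    (\<forall>u\<in>VMor A. fsq F (sq_hid A u) = sq_hid B (fv F u)) \<and>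
    (\<forall>a\<in>HMor A. fsq F (sq_vid A a) = sq_vid B (fh F a)) \<and>
    (\<forall>s\<in>Sq A. \<forall>t\<in>Sq A. sq_right A s = sq_left A t \<longrightarrow> fsq F (sq_hcomp A s t) = sq_hcomp B (fsq F s) (fsq F t)) \<and>
    (\<forall>s\<in>Sq A. \<forall>t\<in>Sq A. sq_bot A s = sq_top A t \<longrightarrow> fsq F (sq_vcomp A s t) = sq_vcomp B (fsq F s) (fsq F t))"

text \<open>comp1 f g is f followed by g; vcomp2 al be is al followed by be
  (vertical composition of 2-cells); hcomp2 is horizontal composition of 2-cells.\<close>

record ('o, 'm, 'c) twocat =
  Obj :: "'o set"
  Mor1 :: "'m set"
  Mor2 :: "'c set"
  dom1 :: "'m \<Rightarrow> 'o"
  cod1 :: "'m \<Rightarrow> 'o"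
  dom2 :: "'c \<Rightarrow> 'm"
  cod2 :: "'c \<Rightarrow> 'm"
  comp1 :: "'m \<Rightarrow> 'm \<Rightarrow> 'm"
  id1 :: "'o \<Rightarrow> 'm"
  vcomp2 :: "'c \<Rightarrow> 'c \<Rightarrow> 'c"
  hcomp2 :: "'c \<Rightarrow> 'c \<Rightarrow> 'c"
  id2 :: "'m \<Rightarrow> 'c"

definition iso2 :: "('o, 'm, 'c) twocat \<Rightarrow> 'c \<Rightarrow> bool" where
  "iso2 C th \<longleftrightarrow> th \<in> Mor2 C \<and>
    (\<exists>th'. th' \<in> Mor2 C \<and> dom2 C th' = cod2 C th \<and> cod2 C th' = dom2 C th \<and>
       vcomp2 C th th' = id2 C (dom2 C th) \<and> vcomp2 C th' th = id2 C (cod2 C th))"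

definition equiv1 :: "('o, 'm, 'c) twocat \<Rightarrow> 'm \<Rightarrow> bool" where
  "equiv1 C f \<longleftrightarrow> f \<in> Mor1 C \<and>
    (\<exists>g eta eps. g \<in> Mor1 C \<and> dom1 C g = cod1 C f \<and> cod1 C g = dom1 C f \<and>
       iso2 C eta \<and> dom2 C eta = id1 C (dom1 C f) \<and> cod2 C eta = comp1 C f g \<and>
       iso2 C eps \<and> dom2 C eps = comp1 C g f \<and> cod2 C eps = id1 C (cod1 C f))"

record ('o1, 'm1, 'c1, 'o2, 'm2, 'c2) twofun =
  gob :: "'o1 \<Rightarrow> 'o2"
  gm1 :: "'m1 \<Rightarrow> 'm2"
  gm2 :: "'c1 \<Rightarrow> 'c2"

definition lack_fibration ::
  "('o1, 'm1, 'c1) twocat \<Rightarrow> ('o2, 'm2, 'c2) twocat \<Rightarrow> ('o1, 'm1, 'c1, 'o2, 'm2, 'c2) twofun \<Rightarrow> bool" where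
  "lack_fibration C D G \<longleftrightarrow>
    (\<forall>b Y. Y \<in> Obj C \<longrightarrow> equiv1 D b \<longrightarrow> cod1 D b = gob G Y \<longrightarrow>
        (\<exists>a. equiv1 C a \<and> cod1 C a = Y \<and> gm1 G a = b)) \<and>
    (\<forall>c be. c \<in> Mor1 C \<longrightarrow> iso2 D be \<longrightarrow> cod2 D be = gm1 G c \<longrightarrow>
        (\<exists>al. iso2 C al \<and> cod2 C al = c \<and> gm2 G al = be))"

definition Hcat :: "('o, 'h, 'v, 's, 'x) dblcat_scheme \<Rightarrow> ('o, 'h, 's) twocat" where
  "Hcat A = \<lparr> Obj = Ob A, Mor1 = HMor A,
     Mor2 = {s \<in> Sq A. sq_left A s = vid A (hdom A (sq_top A s)) \<and> sq_right A s = vid A (hcod A (sq_top A s))},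
     dom1 = hdom A, cod1 = hcod A, dom2 = sq_top A, cod2 = sq_bot A,
     comp1 = hcomp A, id1 = hid A, vcomp2 = sq_vcomp A, hcomp2 = sq_hcomp A, id2 = sq_vid A \<rparr>"

text \<open>A 2-cell of V A is recorded as a quadruple (al, be, s0, s1): a 2-cell
  from the square al to the square be given by the pair of squares (s0, s1).\<close>

definition Vcat :: "('o, 'h, 'v, 's, 'x) dblcat_scheme \<Rightarrow> ('v, 's, 's \<times> 's \<times> 's \<times> 's) twocat" where
  "Vcat A = \<lparr> Obj = VMor A, Mor1 = Sq A,
     Mor2 = {(al, be, s0, s1). al \<in> Sq A \<and> be \<in> Sq A \<and>
        sq_left A al = sq_left A be \<and> sq_right A al = sq_right A be \<and>
        s0 \<in> Sq A \<and> sq_left A s0 = vid A (vdom A (sq_left A al)) \<and> sq_right A s0 = vid A (vdom A (sq_right A al)) \<and>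
        sq_top A s0 = sq_top A al \<and> sq_bot A s0 = sq_top A be \<and>
        s1 \<in> Sq A \<and> sq_left A s1 = vid A (vcod A (sq_left A al)) \<and> sq_right A s1 = vid A (vcod A (sq_right A al)) \<and>
        sq_top A s1 = sq_bot A al \<and> sq_bot A s1 = sq_bot A be \<and>
        sq_vcomp A s0 be = sq_vcomp A al s1},
     dom1 = sq_left A, cod1 = sq_right A,
     dom2 = (\<lambda>(al, be, s0, s1). al), cod2 = (\<lambda>(al, be, s0, s1). be),
     comp1 = sq_hcomp A, id1 = sq_hid A,
     vcomp2 = (\<lambda>(al, be, s0, s1) (al', be', t0, t1). (al, be', sq_vcomp A s0 t0, sq_vcomp A s1 t1)),
     hcomp2 = (\<lambda>(al, be, s0, s1) (al', be', t0, t1).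
        (sq_hcomp A al al', sq_hcomp A be be', sq_hcomp A s0 t0, sq_hcomp A s1 t1)),
     id2 = (\<lambda>al. (al, al, sq_vid A (sq_top A al), sq_vid A (sq_bot A al))) \<rparr>"

definition Hfun :: "('o1, 'h1, 'v1, 's1, 'o2, 'h2, 'v2, 's2) dblfun \<Rightarrow> ('o1, 'h1, 's1, 'o2, 'h2, 's2) twofun" where
  "Hfun F = \<lparr> gob = fob F, gm1 = fh F, gm2 = fsq F \<rparr>"

definition Vfun :: "('o1, 'h1, 'v1, 's1, 'o2, 'h2, 'v2, 's2) dblfun \<Rightarrow>
    ('v1, 's1, 's1 \<times> 's1 \<times> 's1 \<times> 's1, 'v2, 's2, 's2 \<times> 's2 \<times> 's2 \<times> 's2) twofun" where
  "Vfun F = \<lparr> gob = fv F, gm1 = fsq F,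
     gm2 = (\<lambda>(al, be, s0, s1). (fsq F al, fsq F be, fsq F s0, fsq F s1)) \<rparr>"

definition horiz_equivalence :: "('o, 'h, 'v, 's, 'x) dblcat_scheme \<Rightarrow> 'h \<Rightarrow> bool" where
  "horiz_equivalence A a \<longleftrightarrow> equiv1 (Hcat A) a"

definition vert_invertible :: "('o, 'h, 'v, 's, 'x) dblcat_scheme \<Rightarrow> 's \<Rightarrow> bool" where
  "vert_invertible A s \<longleftrightarrow> s \<in> Sq A \<and>
    (\<exists>t\<in>Sq A. sq_top A t = sq_bot A s \<and> sq_bot A t = sq_top A s \<and>
       sq_vcomp A s t = sq_vid A (sq_top A s) \<and> sq_vcomp A t s = sq_vid A (sq_bot A s))"

definition weakly_horiz_invertible :: "('o, 'h, 'v, 's, 'x) dblcat_scheme \<Rightarrow> 's \<Rightarrow> bool" where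
  "weakly_horiz_invertible A s \<longleftrightarrow> equiv1 (Vcat A) s"

definition double_fibration ::
  "('o1, 'h1, 'v1, 's1, 'x) dblcat_scheme \<Rightarrow> ('o2, 'h2, 'v2, 's2, 'y) dblcat_scheme \<Rightarrow>
   ('o1, 'h1, 'v1, 's1, 'o2, 'h2, 'v2, 's2) dblfun \<Rightarrow> bool" where
  "double_fibration A B F \<longleftrightarrow>
    \<comment> \<open>(df1)\<close>
    (\<forall>b C. C \<in> Ob A \<longrightarrow> horiz_equivalence B b \<longrightarrow> hcod B b = fob F C \<longrightarrow>
        (\<exists>a. horiz_equivalence A a \<and> hcod A a = C \<and> fh F a = b)) \<and>
    \<comment> \<open>(df2)\<close>
    (\<forall>c be. c \<in> HMor A \<longrightarrow> vert_invertible B be \<longrightarrow>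
        sq_left B be = vid B (fob F (hdom A c)) \<longrightarrow> sq_right B be = vid B (fob F (hcod A c)) \<longrightarrow>
        sq_bot B be = fh F c \<longrightarrow>
        (\<exists>al. vert_invertible A al \<and> sq_left A al = vid A (hdom A c) \<and>
              sq_right A al = vid A (hcod A c) \<and> sq_bot A al = c \<and> fsq F al = be)) \<and>
    \<comment> \<open>(df3)\<close>
    (\<forall>u' be. u' \<in> VMor A \<longrightarrow> weakly_horiz_invertible B be \<longrightarrow> sq_right B be = fv F u' \<longrightarrow>
        (\<exists>al. weakly_horiz_invertible A al \<and> sq_right A al = u' \<and> fsq F al = be))"

end

theory Submission
  imports Defs
begin

text \<open>Conditions (df1) and (df3) are literally (f1) for \<open>H F\<close> and \<open>V F\<close>, and (df2) is (f2) for
  \<open>H F\<close>, because the invertible 2-cells of \<open>H A\<close> are exactly the vertically invertible squares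
  whose vertical sides are identities. What remains is that (f2) for \<open>H F\<close> implies (f2) for \<open>V F\<close>:
  an invertible 2-cell of \<open>V B\<close> into \<open>F c\<close> is given by two such globular squares \<open>s0\<close>, \<open>s1\<close>
  on top of and below \<open>F c\<close>; lifting them to \<open>a0\<close>, \<open>a1\<close> in \<open>A\<close>, the square
  \<open>a0 ; c ; a1\<inverse>\<close> together with \<open>(a0, a1)\<close> is an invertible 2-cell of \<open>V A\<close> into \<open>c\<close> over the given one.\<close>

locale dbl_cat =
  fixes D :: "('o, 'h, 'v, 's, 'x) dblcat_scheme"
  assumes double_category: "double_category D"
begin

lemma hdom_hcod_in_Ob:
  assumes "a \<in> HMor D"
  shows "hdom D a \<in> Ob D" "hcod D a \<in> Ob D"
  using double_category assms unfolding double_category_def by auto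

lemma vid_props:
  assumes "X \<in> Ob D"
  shows "vid D X \<in> VMor D" "vdom D (vid D X) = X" "vcod D (vid D X) = X"
  using double_category assms unfolding double_category_def by auto

lemma vcomp_vid:
  assumes "u \<in> VMor D"
  shows "vcomp D (vid D (vdom D u)) u = u" "vcomp D u (vid D (vcod D u)) = u"
  using double_category assms unfolding double_category_def by auto

lemma sq_boundary:
  assumes "s \<in> Sq D"
  shows "sq_top D s \<in> HMor D" "sq_bot D s \<in> HMor D" "sq_left D s \<in> VMor D" "sq_right D s \<in> VMor D"
    "vdom D (sq_left D s) = hdom D (sq_top D s)" "vdom D (sq_right D s) = hcod D (sq_top D s)"
    "vcod D (sq_left D s) = hdom D (sq_bot D s)" "vcod D (sq_right D s) = hcod D (sq_bot D s)"
  using double_category assms unfolding double_category_def by auto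

lemma sq_vid_props:
  assumes "a \<in> HMor D"
  shows "sq_vid D a \<in> Sq D" "sq_top D (sq_vid D a) = a" "sq_bot D (sq_vid D a) = a"
    "sq_left D (sq_vid D a) = vid D (hdom D a)" "sq_right D (sq_vid D a) = vid D (hcod D a)"
  using double_category assms unfolding double_category_def by auto

lemma sq_vcomp_props:
  assumes "s \<in> Sq D" "t \<in> Sq D" "sq_bot D s = sq_top D t"
  shows "sq_vcomp D s t \<in> Sq D" "sq_top D (sq_vcomp D s t) = sq_top D s"
    "sq_bot D (sq_vcomp D s t) = sq_bot D t"
    "sq_left D (sq_vcomp D s t) = vcomp D (sq_left D s) (sq_left D t)"
    "sq_right D (sq_vcomp D s t) = vcomp D (sq_right D s) (sq_right D t)"
  using double_category assms unfolding double_category_def by auto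

lemma sq_vcomp_vid:
  assumes "s \<in> Sq D"
  shows "sq_vcomp D (sq_vid D (sq_top D s)) s = s" "sq_vcomp D s (sq_vid D (sq_bot D s)) = s"
  using double_category assms unfolding double_category_def by auto

lemma sq_vcomp_assoc:
  assumes "s \<in> Sq D" "t \<in> Sq D" "r \<in> Sq D" "sq_bot D s = sq_top D t" "sq_bot D t = sq_top D r"
  shows "sq_vcomp D (sq_vcomp D s t) r = sq_vcomp D s (sq_vcomp D t r)"
  using double_category assms unfolding double_category_def by auto

end

definition globular :: "('o, 'h, 'v, 's, 'x) dblcat_scheme \<Rightarrow> 's \<Rightarrow> bool" where
  "globular D s \<longleftrightarrow> s \<in> Sq D \<and>
     sq_left D s = vid D (hdom D (sq_top D s)) \<and> sq_right D s = vid D (hcod D (sq_top D s))"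

definition vinverse :: "('o, 'h, 'v, 's, 'x) dblcat_scheme \<Rightarrow> 's \<Rightarrow> 's \<Rightarrow> bool" where
  "vinverse D s t \<longleftrightarrow> s \<in> Sq D \<and> t \<in> Sq D \<and> sq_top D t = sq_bot D s \<and> sq_bot D t = sq_top D s \<and>
     sq_vcomp D s t = sq_vid D (sq_top D s) \<and> sq_vcomp D t s = sq_vid D (sq_bot D s)"

lemma vert_invertible_iff_vinverse: "vert_invertible D s \<longleftrightarrow> (\<exists>t. vinverse D s t)"
  unfolding vert_invertible_def vinverse_def by blast

lemma vinverse_sym: "vinverse D s t \<Longrightarrow> vinverse D t s"
  unfolding vinverse_def by auto

lemma Hcat_simps [simp]:
  "Obj (Hcat D) = Ob D" "Mor1 (Hcat D) = HMor D" "Mor2 (Hcat D) = Collect (globular D)"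
  "cod1 (Hcat D) = hcod D" "dom2 (Hcat D) = sq_top D" "cod2 (Hcat D) = sq_bot D"
  "vcomp2 (Hcat D) = sq_vcomp D" "id2 (Hcat D) = sq_vid D"
  by (auto simp: Hcat_def globular_def)

lemma Vcat_simps [simp]:
  "Obj (Vcat D) = VMor D" "Mor1 (Vcat D) = Sq D" "cod1 (Vcat D) = sq_right D"
  "dom2 (Vcat D) (al, be, s0, s1) = al" "cod2 (Vcat D) (al, be, s0, s1) = be"
  "vcomp2 (Vcat D) (al, be, s0, s1) (al', be', t0, t1) = (al, be', sq_vcomp D s0 t0, sq_vcomp D s1 t1)"
  "id2 (Vcat D) al = (al, al, sq_vid D (sq_top D al), sq_vid D (sq_bot D al))"
  "(al, be, s0, s1) \<in> Mor2 (Vcat D) \<longleftrightarrow> al \<in> Sq D \<and> be \<in> Sq D \<and>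
     sq_left D al = sq_left D be \<and> sq_right D al = sq_right D be \<and>
     s0 \<in> Sq D \<and> sq_left D s0 = vid D (vdom D (sq_left D al)) \<and> sq_right D s0 = vid D (vdom D (sq_right D al)) \<and>
     sq_top D s0 = sq_top D al \<and> sq_bot D s0 = sq_top D be \<and>
     s1 \<in> Sq D \<and> sq_left D s1 = vid D (vcod D (sq_left D al)) \<and> sq_right D s1 = vid D (vcod D (sq_right D al)) \<and>
     sq_top D s1 = sq_bot D al \<and> sq_bot D s1 = sq_bot D be \<and>
     sq_vcomp D s0 be = sq_vcomp D al s1"
  by (simp_all add: Vcat_def)

lemma Hfun_simps [simp]: "gob (Hfun F) = fob F" "gm1 (Hfun F) = fh F" "gm2 (Hfun F) = fsq F"
  by (simp_all add: Hfun_def)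

lemma Vfun_simps [simp]: "gob (Vfun F) = fv F" "gm1 (Vfun F) = fsq F"
  "gm2 (Vfun F) (al, be, s0, s1) = (fsq F al, fsq F be, fsq F s0, fsq F s1)"
  by (simp_all add: Vfun_def)

lemma iso2_Hcat_iff: "iso2 (Hcat D) s \<longleftrightarrow> globular D s \<and> (\<exists>t. globular D t \<and> vinverse D s t)"
  by (auto simp: iso2_def vinverse_def globular_def)

context dbl_cat
begin

lemma globular_iff_bot:
  assumes s: "s \<in> Sq D"
  shows "globular D s \<longleftrightarrow>
    sq_left D s = vid D (hdom D (sq_bot D s)) \<and> sq_right D s = vid D (hcod D (sq_bot D s))"
proof -
  have ends: "hdom D (sq_top D s) \<in> Ob D" "hcod D (sq_top D s) \<in> Ob D"
    "hdom D (sq_bot D s) \<in> Ob D" "hcod D (sq_bot D s) \<in> Ob D"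
    using sq_boundary[OF s] hdom_hcod_in_Ob by auto
  show ?thesis
    unfolding globular_def using s sq_boundary[OF s] vid_props[OF ends(1)] vid_props[OF ends(2)]
      vid_props[OF ends(3)] vid_props[OF ends(4)] by auto
qed

lemma globular_bot_ends:
  assumes "globular D s"
  shows "hdom D (sq_bot D s) = hdom D (sq_top D s)" "hcod D (sq_bot D s) = hcod D (sq_top D s)"
proof -
  have s: "s \<in> Sq D" using assms unfolding globular_def by blast
  have "hdom D (sq_bot D s) = vcod D (vid D (hdom D (sq_top D s)))"
    using assms sq_boundary(7)[OF s] unfolding globular_def by simp
  then show "hdom D (sq_bot D s) = hdom D (sq_top D s)"
    using vid_props(3) hdom_hcod_in_Ob(1) sq_boundary(1)[OF s] by simp
  have "hcod D (sq_bot D s) = vcod D (vid D (hcod D (sq_top D s)))"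
    using assms sq_boundary(8)[OF s] unfolding globular_def by simp
  then show "hcod D (sq_bot D s) = hcod D (sq_top D s)"
    using vid_props(3) hdom_hcod_in_Ob(2) sq_boundary(1)[OF s] by simp
qed

lemma vinverse_boundary:
  assumes glob: "globular D s" and st: "vinverse D s t"
  shows "sq_left D t = sq_left D s" "sq_right D t = sq_right D s"
proof -
  have s: "s \<in> Sq D" and t: "t \<in> Sq D" and top_t: "sq_top D t = sq_bot D s"
    and st_id: "sq_vcomp D s t = sq_vid D (sq_top D s)"
    using st unfolding vinverse_def by auto
  have "sq_left D t = vcomp D (vid D (vdom D (sq_left D t))) (sq_left D t)"
    using vcomp_vid(1) sq_boundary(3)[OF t] by simp
  also have "vdom D (sq_left D t) = hdom D (sq_top D s)"
    using sq_boundary(5)[OF t] top_t globular_bot_ends(1)[OF glob] by simp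
  also have "vcomp D (vid D (hdom D (sq_top D s))) (sq_left D t) = sq_left D (sq_vcomp D s t)"
    using sq_vcomp_props(4)[OF s t] top_t glob unfolding globular_def by simp
  also have "\<dots> = sq_left D s"
    using st_id sq_vid_props(4) sq_boundary(1)[OF s] glob unfolding globular_def by simp
  finally show "sq_left D t = sq_left D s" .
  have "sq_right D t = vcomp D (vid D (vdom D (sq_right D t))) (sq_right D t)"
    using vcomp_vid(1) sq_boundary(4)[OF t] by simp
  also have "vdom D (sq_right D t) = hcod D (sq_top D s)"
    using sq_boundary(6)[OF t] top_t globular_bot_ends(2)[OF glob] by simp
  also have "vcomp D (vid D (hcod D (sq_top D s))) (sq_right D t) = sq_right D (sq_vcomp D s t)"
    using sq_vcomp_props(5)[OF s t] top_t glob unfolding globular_def by simp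
  also have "\<dots> = sq_right D s"
    using st_id sq_vid_props(5) sq_boundary(1)[OF s] glob unfolding globular_def by simp
  finally show "sq_right D t = sq_right D s" .
qed

lemma globular_vinverse:
  assumes glob: "globular D s" and st: "vinverse D s t"
  shows "globular D t"
  using glob vinverse_boundary[OF glob st] globular_bot_ends[OF glob] st
  unfolding globular_def vinverse_def by simp

lemma iso2_Hcat_iff_vert_invertible: "iso2 (Hcat D) s \<longleftrightarrow> globular D s \<and> vert_invertible D s"
proof
  assume "iso2 (Hcat D) s"
  then show "globular D s \<and> vert_invertible D s"
    unfolding iso2_Hcat_iff vert_invertible_iff_vinverse by blast
next
  assume "globular D s \<and> vert_invertible D s"
  then obtain t where "globular D s" "vinverse D s t"
    unfolding vert_invertible_iff_vinverse by blast
  then show "iso2 (Hcat D) s"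
    unfolding iso2_Hcat_iff using globular_vinverse by blast
qed

lemma iso2_Hcat_bot_iff:
  "iso2 (Hcat D) s \<and> sq_bot D s = c \<longleftrightarrow>
   vert_invertible D s \<and> sq_left D s = vid D (hdom D c) \<and> sq_right D s = vid D (hcod D c) \<and>
   sq_bot D s = c"
proof (cases "s \<in> Sq D")
  case True
  then show ?thesis using iso2_Hcat_iff_vert_invertible globular_iff_bot by blast
next
  case False
  then show ?thesis unfolding iso2_Hcat_iff_vert_invertible vert_invertible_def by blast
qed

lemma sq_vcomp_vinverse_cancel_right:
  assumes st: "vinverse D s t" and p: "p \<in> Sq D" "sq_bot D p = sq_top D s"
  shows "sq_vcomp D (sq_vcomp D p s) t = p"
proof -
  have "sq_vcomp D (sq_vcomp D p s) t = sq_vcomp D p (sq_vcomp D s t)"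
    using st p sq_vcomp_assoc[of p s t] unfolding vinverse_def by simp
  also have "\<dots> = p"
    using st p sq_vcomp_vid(2)[OF p(1)] unfolding vinverse_def by simp
  finally show ?thesis .
qed

lemma sq_vcomp_vinverse_cancel_left:
  assumes st: "vinverse D s t" and p: "p \<in> Sq D" "sq_top D p = sq_bot D s"
  shows "sq_vcomp D t (sq_vcomp D s p) = p"
proof -
  have "sq_vcomp D t (sq_vcomp D s p) = sq_vcomp D (sq_vcomp D t s) p"
    using st p sq_vcomp_assoc[of t s p] unfolding vinverse_def by simp
  also have "\<dots> = p"
    using st p sq_vcomp_vid(1)[OF p(1)] unfolding vinverse_def by simp
  finally show ?thesis .
qed

lemma iso2_Vcat_components:
  assumes iso: "iso2 (Vcat D) (al, be, s0, s1)"
  shows "iso2 (Hcat D) s0" "iso2 (Hcat D) s1"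
proof -
  obtain t0 t1 where cells: "(al, be, s0, s1) \<in> Mor2 (Vcat D)" "(be, al, t0, t1) \<in> Mor2 (Vcat D)"
    and inv: "vcomp2 (Vcat D) (al, be, s0, s1) (be, al, t0, t1) = id2 (Vcat D) al"
      "vcomp2 (Vcat D) (be, al, t0, t1) (al, be, s0, s1) = id2 (Vcat D) be"
    using iso unfolding iso2_def by force
  have al: "al \<in> Sq D" using cells(1) by simp
  have "globular D s0 \<and> vinverse D s0 t0" "globular D s1 \<and> vinverse D s1 t1"
    using cells inv sq_boundary[OF al] unfolding globular_def vinverse_def by auto
  then show "iso2 (Hcat D) s0" "iso2 (Hcat D) s1"
    unfolding iso2_Hcat_iff_vert_invertible vert_invertible_iff_vinverse by blast+
qed

lemma sides_globular_sq_vcomp: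
  assumes a: "globular D a" and c: "c \<in> Sq D" and ends: "sq_bot D a = sq_top D c"
  shows "sq_left D (sq_vcomp D a c) = sq_left D c" "sq_right D (sq_vcomp D a c) = sq_right D c"
  using sq_vcomp_props(4,5)[OF _ c ends] a globular_bot_ends[OF a] ends sq_boundary[OF c]
    vcomp_vid(1)[OF sq_boundary(3)[OF c]] vcomp_vid(1)[OF sq_boundary(4)[OF c]]
  unfolding globular_def by simp_all

lemma sides_sq_vcomp_globular:
  assumes c: "c \<in> Sq D" and a: "globular D a" and ends: "sq_bot D c = sq_top D a"
  shows "sq_left D (sq_vcomp D c a) = sq_left D c" "sq_right D (sq_vcomp D c a) = sq_right D c"
  using sq_vcomp_props(4,5)[OF c _ ends] a ends sq_boundary[OF c]
    vcomp_vid(2)[OF sq_boundary(3)[OF c]] vcomp_vid(2)[OF sq_boundary(4)[OF c]]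
  unfolding globular_def by simp_all

lemma conjugate_in_Mor2_Vcat:
  assumes c: "c \<in> Sq D"
    and a0: "globular D a0" "vinverse D a0 a0'" "sq_bot D a0 = sq_top D c"
    and a1: "globular D a1" "vinverse D a1 a1'" "sq_bot D a1 = sq_bot D c"
  defines "al \<equiv> sq_vcomp D (sq_vcomp D a0 c) a1'"
  shows "(al, c, a0, a1) \<in> Mor2 (Vcat D)" "(c, al, a0', a1') \<in> Mor2 (Vcat D)"
proof -
  define p where "p = sq_vcomp D a0 c"
  have sq: "a0 \<in> Sq D" "a0' \<in> Sq D" "a1 \<in> Sq D" "a1' \<in> Sq D"
    and inv0: "sq_top D a0' = sq_top D c" "sq_bot D a0' = sq_top D a0"
    and inv1: "sq_top D a1' = sq_bot D c" "sq_bot D a1' = sq_top D a1"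
    using a0 a1 unfolding vinverse_def by auto
  have bd0: "sq_left D a0 = vid D (vdom D (sq_left D c))" "sq_right D a0 = vid D (vdom D (sq_right D c))"
    using globular_iff_bot[OF sq(1)] a0(1,3) sq_boundary[OF c] by auto
  have bd1: "sq_left D a1 = vid D (vcod D (sq_left D c))" "sq_right D a1 = vid D (vcod D (sq_right D c))"
    using globular_iff_bot[OF sq(3)] a1(1,3) sq_boundary[OF c] by auto
  have p: "p \<in> Sq D" "sq_top D p = sq_top D a0" "sq_bot D p = sq_bot D c"
    "sq_left D p = sq_left D c" "sq_right D p = sq_right D c"
    using sq_vcomp_props[OF sq(1) c a0(3)] sides_globular_sq_vcomp[OF a0(1) c a0(3)]
    unfolding p_def by auto
  have al: "al \<in> Sq D" "sq_top D al = sq_top D a0" "sq_bot D al = sq_top D a1"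
    "sq_left D al = sq_left D c" "sq_right D al = sq_right D c"
    using sq_vcomp_props[OF p(1) sq(4)] sides_sq_vcomp_globular[OF p(1) globular_vinverse[OF a1(1,2)]]
      p inv1
    unfolding al_def p_def[symmetric] by auto
  have "sq_vcomp D al a1 = p"
    using sq_vcomp_vinverse_cancel_right[OF vinverse_sym[OF a1(2)] p(1)] p(3) inv1(1)
    unfolding al_def p_def by simp
  then show "(al, c, a0, a1) \<in> Mor2 (Vcat D)"
    using c al sq bd0 bd1 a0(3) a1(3) unfolding p_def by simp
  have "sq_vcomp D a0' al = sq_vcomp D (sq_vcomp D a0' p) a1'"
    using sq_vcomp_assoc[OF sq(2) p(1) sq(4)] inv0 inv1 p unfolding al_def p_def by simp
  also have "\<dots> = sq_vcomp D c a1'"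
    using sq_vcomp_vinverse_cancel_left[OF a0(2) c] a0(3) unfolding p_def by simp
  finally show "(c, al, a0', a1') \<in> Mor2 (Vcat D)"
    using c al sq bd0 bd1 vinverse_boundary[OF a0(1,2)] vinverse_boundary[OF a1(1,2)] inv0 inv1 by simp
qed

lemma iso2_Vcat_conjugate:
  assumes c: "c \<in> Sq D"
    and a0: "globular D a0" "vinverse D a0 a0'" "sq_bot D a0 = sq_top D c"
    and a1: "globular D a1" "vinverse D a1 a1'" "sq_bot D a1 = sq_bot D c"
  shows "iso2 (Vcat D) (sq_vcomp D (sq_vcomp D a0 c) a1', c, a0, a1)"
proof -
  let ?al = "sq_vcomp D (sq_vcomp D a0 c) a1'"
  note cells = conjugate_in_Mor2_Vcat[OF assms]
  show ?thesis
    unfolding iso2_def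
  proof (intro conjI exI[of _ "(c, ?al, a0', a1')"])
    show "(?al, c, a0, a1) \<in> Mor2 (Vcat D)" by (fact cells(1))
    show "(c, ?al, a0', a1') \<in> Mor2 (Vcat D)" by (fact cells(2))
  qed (use cells a0(2,3) a1(2,3) in \<open>simp_all add: vinverse_def\<close>)
qed

end

definition lifts_equivalences ::
  "('o1, 'm1, 'c1) twocat \<Rightarrow> ('o2, 'm2, 'c2) twocat \<Rightarrow> ('o1, 'm1, 'c1, 'o2, 'm2, 'c2) twofun \<Rightarrow> bool" where
  "lifts_equivalences C C' G \<longleftrightarrow>
    (\<forall>b Y. Y \<in> Obj C \<longrightarrow> equiv1 C' b \<longrightarrow> cod1 C' b = gob G Y \<longrightarrow>
        (\<exists>a. equiv1 C a \<and> cod1 C a = Y \<and> gm1 G a = b))"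

definition lifts_invertible_2cells ::
  "('o1, 'm1, 'c1) twocat \<Rightarrow> ('o2, 'm2, 'c2) twocat \<Rightarrow> ('o1, 'm1, 'c1, 'o2, 'm2, 'c2) twofun \<Rightarrow> bool" where
  "lifts_invertible_2cells C C' G \<longleftrightarrow>
    (\<forall>c be. c \<in> Mor1 C \<longrightarrow> iso2 C' be \<longrightarrow> cod2 C' be = gm1 G c \<longrightarrow>
        (\<exists>al. iso2 C al \<and> cod2 C al = c \<and> gm2 G al = be))"

lemma lack_fibration_iff:
  "lack_fibration C C' G \<longleftrightarrow> lifts_equivalences C C' G \<and> lifts_invertible_2cells C C' G"
  unfolding lack_fibration_def lifts_equivalences_def lifts_invertible_2cells_def ..

locale dbl_functor = A: dbl_cat A + B: dbl_cat B
  for A :: "('o1, 'h1, 'v1, 's1, 'x) dblcat_scheme" and B :: "('o2, 'h2, 'v2, 's2, 'y) dblcat_scheme" +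
  fixes F :: "('o1, 'h1, 'v1, 's1, 'o2, 'h2, 'v2, 's2) dblfun"
  assumes double_functor: "double_functor A B F"
begin

lemma fh_boundary:
  assumes "a \<in> HMor A"
  shows "hdom B (fh F a) = fob F (hdom A a)" "hcod B (fh F a) = fob F (hcod A a)"
  using double_functor assms unfolding double_functor_def by auto

lemma fsq_boundary:
  assumes "s \<in> Sq A"
  shows "fsq F s \<in> Sq B" "sq_top B (fsq F s) = fh F (sq_top A s)" "sq_bot B (fsq F s) = fh F (sq_bot A s)"
  using double_functor assms unfolding double_functor_def by auto

lemma fsq_sq_vid: "a \<in> HMor A \<Longrightarrow> fsq F (sq_vid A a) = sq_vid B (fh F a)"
  using double_functor unfolding double_functor_def by auto

lemma fsq_sq_vcomp:
  "s \<in> Sq A \<Longrightarrow> t \<in> Sq A \<Longrightarrow> sq_bot A s = sq_top A t \<Longrightarrow>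
   fsq F (sq_vcomp A s t) = sq_vcomp B (fsq F s) (fsq F t)"
  using double_functor unfolding double_functor_def by auto

lemma fsq_vinverse:
  assumes "vinverse A s t"
  shows "vinverse B (fsq F s) (fsq F t)"
proof -
  have s: "s \<in> Sq A" and t: "t \<in> Sq A" and ends: "sq_top A t = sq_bot A s" "sq_bot A t = sq_top A s"
    and inv: "sq_vcomp A s t = sq_vid A (sq_top A s)" "sq_vcomp A t s = sq_vid A (sq_bot A s)"
    using assms unfolding vinverse_def by auto
  have "sq_vcomp B (fsq F s) (fsq F t) = sq_vid B (fh F (sq_top A s))"
    using fsq_sq_vcomp[OF s t] ends inv fsq_sq_vid A.sq_boundary(1)[OF s] by simp
  moreover have "sq_vcomp B (fsq F t) (fsq F s) = sq_vid B (fh F (sq_bot A s))"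
    using fsq_sq_vcomp[OF t s] ends inv fsq_sq_vid A.sq_boundary(2)[OF s] by simp
  ultimately show ?thesis
    using fsq_boundary[OF s] fsq_boundary[OF t] ends unfolding vinverse_def by simp
qed

lemma double_fibration_iff:
  "double_fibration A B F \<longleftrightarrow>
     lifts_equivalences (Hcat A) (Hcat B) (Hfun F) \<and> lifts_invertible_2cells (Hcat A) (Hcat B) (Hfun F) \<and>
     lifts_equivalences (Vcat A) (Vcat B) (Vfun F)"
proof -
  have B_cell_iff: "iso2 (Hcat B) be \<and> sq_bot B be = fh F c \<longleftrightarrow>
      vert_invertible B be \<and> sq_left B be = vid B (fob F (hdom A c)) \<and>
      sq_right B be = vid B (fob F (hcod A c)) \<and> sq_bot B be = fh F c"
    if "c \<in> HMor A" for c be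
    using B.iso2_Hcat_bot_iff[of be "fh F c"] fh_boundary[OF that] by simp
  have "(\<forall>c be. c \<in> HMor A \<longrightarrow> vert_invertible B be \<longrightarrow>
          sq_left B be = vid B (fob F (hdom A c)) \<longrightarrow> sq_right B be = vid B (fob F (hcod A c)) \<longrightarrow>
          sq_bot B be = fh F c \<longrightarrow>
          (\<exists>al. vert_invertible A al \<and> sq_left A al = vid A (hdom A c) \<and>
                sq_right A al = vid A (hcod A c) \<and> sq_bot A al = c \<and> fsq F al = be))
        \<longleftrightarrow> lifts_invertible_2cells (Hcat A) (Hcat B) (Hfun F)"
    unfolding lifts_invertible_2cells_def Hcat_simps Hfun_simps
    using B_cell_iff A.iso2_Hcat_bot_iff by (simp (no_asm_use)) metis
  then show ?thesis
    unfolding double_fibration_def lifts_equivalences_def horiz_equivalence_def weakly_horiz_invertible_def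
    by auto
qed

lemma lifts_invertible_2cells_Vfun:
  assumes H: "lifts_invertible_2cells (Hcat A) (Hcat B) (Hfun F)"
  shows "lifts_invertible_2cells (Vcat A) (Vcat B) (Vfun F)"
  unfolding lifts_invertible_2cells_def
proof (intro allI impI)
  fix c th
  assume "c \<in> Mor1 (Vcat A)" and iso: "iso2 (Vcat B) th" and "cod2 (Vcat B) th = gm1 (Vfun F) c"
  then obtain be s0 s1 where c: "c \<in> Sq A" and th: "th = (be, fsq F c, s0, s1)"
    by (cases th) auto
  have cell: "(be, fsq F c, s0, s1) \<in> Mor2 (Vcat B)"
    using iso th unfolding iso2_def by blast
  have s0_s1: "iso2 (Hcat B) s0" "iso2 (Hcat B) s1"
    using B.iso2_Vcat_components iso th by blast+
  obtain a0 where a0: "iso2 (Hcat A) a0" "sq_bot A a0 = sq_top A c" "fsq F a0 = s0"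
    using H s0_s1(1) cell fsq_boundary[OF c] A.sq_boundary(1)[OF c]
    unfolding lifts_invertible_2cells_def by force
  obtain a1 where a1: "iso2 (Hcat A) a1" "sq_bot A a1 = sq_bot A c" "fsq F a1 = s1"
    using H s0_s1(2) cell fsq_boundary[OF c] A.sq_boundary(2)[OF c]
    unfolding lifts_invertible_2cells_def by force
  obtain a0' a1' where inv: "vinverse A a0 a0'" "vinverse A a1 a1'"
    using a0(1) a1(1) unfolding iso2_Hcat_iff by blast
  have glob: "globular A a0" "globular A a1"
    using a0(1) a1(1) unfolding iso2_Hcat_iff by blast+
  define al where "al = sq_vcomp A (sq_vcomp A a0 c) a1'"
  have "fsq F al = sq_vcomp B (sq_vcomp B s0 (fsq F c)) (fsq F a1')"
    using fsq_sq_vcomp A.sq_vcomp_props c inv a0 a1 unfolding al_def vinverse_def by simp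
  also have "\<dots> = sq_vcomp B (sq_vcomp B be s1) (fsq F a1')"
    using cell by simp
  also have "\<dots> = be"
    using B.sq_vcomp_vinverse_cancel_right[OF fsq_vinverse[OF inv(2)]] cell a1(3) by simp
  finally have "fsq F al = be" .
  moreover have "iso2 (Vcat A) (al, c, a0, a1)"
    unfolding al_def using A.iso2_Vcat_conjugate[OF c glob(1) inv(1) a0(2) glob(2) inv(2) a1(2)] .
  ultimately show "\<exists>al. iso2 (Vcat A) al \<and> cod2 (Vcat A) al = c \<and> gm2 (Vfun F) al = th"
    using th a0(3) a1(3) by auto
qed

end

theorem proposition3p13:
  fixes A :: "('o1, 'h1, 'v1, 's1) dblcat" and B :: "('o2, 'h2, 'v2, 's2) dblcat"
    and F :: "('o1, 'h1, 'v1, 's1, 'o2, 'h2, 'v2, 's2) dblfun"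
  assumes "double_functor A B F"
  shows "double_fibration A B F \<longleftrightarrow>
           lack_fibration (Hcat A) (Hcat B) (Hfun F) \<and> lack_fibration (Vcat A) (Vcat B) (Vfun F)"
proof -
  interpret dbl_functor A B F
    using assms unfolding dbl_functor_def dbl_functor_axioms_def dbl_cat_def double_functor_def by blast
  show ?thesis
    unfolding lack_fibration_iff double_fibration_iff using lifts_invertible_2cells_Vfun by blast
qed

end
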